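(* Let $f:\mathbb{C}^2\to M_2(\mathbb{C})$ be the unital C*-algebra embedding $f(a,b)=\begin{pmatrix}a&0\\0&b\end{pmatrix}$, and let $\sigma:\mathrm{Max}\,\mathbb{C}^2\to\mathcal{T}(\mathbb{C}^2)$ be the quotient map $M\mapsto 1\cdot M\cdot 1$ (sending a closed subspace to the closed two-sided ideal it generates). Then the pushout of $\mathrm{Max}\,f:\mathrm{Max}\,\mathbb{C}^2\to\mathrm{Max}\,M_2(\mathbb{C})$ and $\sigma$ in the category of quantales and quantale homomorphisms is the trivial quantale.
   Context: A quantale is a complete lattice with an associative multiplication $\cdot$ distributing over arbitrary joins in both variables; a quantale homomorphism preserves arbitrary joins and multiplication; a quantale is trivial if its bottom equals its top. For a unital C*-algebra $A$, $\mathrm{Max}\,A$ is the quantale of closed linear subspaces of $A$ with join the closure of the sum and product $M\cdot N$ the closure of the linear span of $\{ab:a\in M,b\in N\}$; its top $1$ is $A$. For a unital *-homomorphism $f:A\to B$, $\mathrm{Max}\,f(M)=\overline{f[M]}$. $\mathcal{T}(\mathbb{C}^2)$ is the locale of closed ideals of $\mathbb{C}^2$. *)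

theory Defs
  imports "HOL-Analysis.Analysis"
begin

record 'a quantale =
  carrier_q :: "'a set"
  le_q :: "'a \<Rightarrow> 'a \<Rightarrow> bool"
  mult_q :: "'a \<Rightarrow> 'a \<Rightarrow> 'a"

definition is_lub_q :: "'a quantale \<Rightarrow> 'a set \<Rightarrow> 'a \<Rightarrow> bool" where
  "is_lub_q Q S x \<longleftrightarrow> x \<in> carrier_q Q \<and> (\<forall>y\<in>S. le_q Q y x) \<and>
     (\<forall>z\<in>carrier_q Q. (\<forall>y\<in>S. le_q Q y z) \<longrightarrow> le_q Q x z)"

definition join_q :: "'a quantale \<Rightarrow> 'a set \<Rightarrow> 'a" where
  "join_q Q S = (THE x. is_lub_q Q S x)"

definition is_quantale :: "'a quantale \<Rightarrow> bool" where
  "is_quantale Q \<longleftrightarrow>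
     (\<forall>x\<in>carrier_q Q. le_q Q x x) \<and>
     (\<forall>x\<in>carrier_q Q. \<forall>y\<in>carrier_q Q. le_q Q x y \<and> le_q Q y x \<longrightarrow> x = y) \<and>
     (\<forall>x\<in>carrier_q Q. \<forall>y\<in>carrier_q Q. \<forall>z\<in>carrier_q Q.
         le_q Q x y \<and> le_q Q y z \<longrightarrow> le_q Q x z) \<and>
     (\<forall>S. S \<subseteq> carrier_q Q \<longrightarrow> (\<exists>x. is_lub_q Q S x)) \<and>
     (\<forall>x\<in>carrier_q Q. \<forall>y\<in>carrier_q Q. mult_q Q x y \<in> carrier_q Q) \<and>
     (\<forall>x\<in>carrier_q Q. \<forall>y\<in>carrier_q Q. \<forall>z\<in>carrier_q Q.
         mult_q Q (mult_q Q x y) z = mult_q Q x (mult_q Q y z)) \<and>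
     (\<forall>a\<in>carrier_q Q. \<forall>S. S \<subseteq> carrier_q Q \<longrightarrow>
         mult_q Q a (join_q Q S) = join_q Q ((\<lambda>s. mult_q Q a s) ` S) \<and>
         mult_q Q (join_q Q S) a = join_q Q ((\<lambda>s. mult_q Q s a) ` S))"

definition quantale_hom :: "'a quantale \<Rightarrow> 'b quantale \<Rightarrow> ('a \<Rightarrow> 'b) \<Rightarrow> bool" where
  "quantale_hom Q R h \<longleftrightarrow>
     h ` carrier_q Q \<subseteq> carrier_q R \<and>
     (\<forall>S. S \<subseteq> carrier_q Q \<longrightarrow> h (join_q Q S) = join_q R (h ` S)) \<and>
     (\<forall>x\<in>carrier_q Q. \<forall>y\<in>carrier_q Q. h (mult_q Q x y) = mult_q R (h x) (h y))"

definition is_trivial_q :: "'a quantale \<Rightarrow> bool" where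
  "is_trivial_q Q \<longleftrightarrow> join_q Q {} = join_q Q (carrier_q Q)"

text \<open>Pushout of \<open>f : A \<rightarrow> B\<close>, \<open>g : A \<rightarrow> C\<close> with cocone \<open>(P, i, j)\<close>, universal property
  tested against all quantales whose elements live in the type \<open>'q\<close>.
  Quantifying the type \<open>'q\<close> schematically at theorem level gives all quantales.\<close>
definition is_pushout_q ::
  "'a quantale \<Rightarrow> 'b quantale \<Rightarrow> 'c quantale \<Rightarrow> ('a \<Rightarrow> 'b) \<Rightarrow> ('a \<Rightarrow> 'c) \<Rightarrow>
   'p quantale \<Rightarrow> ('b \<Rightarrow> 'p) \<Rightarrow> ('c \<Rightarrow> 'p) \<Rightarrow> 'q itself \<Rightarrow> bool" where
  "is_pushout_q A B C f g P i j _ \<longleftrightarrow>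
     is_quantale P \<and> quantale_hom B P i \<and> quantale_hom C P j \<and>
     (\<forall>x\<in>carrier_q A. i (f x) = j (g x)) \<and>
     (\<forall>(Q :: 'q quantale) u v.
        is_quantale Q \<and> quantale_hom B Q u \<and> quantale_hom C Q v \<and>
        (\<forall>x\<in>carrier_q A. u (f x) = v (g x)) \<longrightarrow>
        (\<exists>k. quantale_hom P Q k \<and> (\<forall>y\<in>carrier_q B. k (i y) = u y) \<and>
             (\<forall>z\<in>carrier_q C. k (j z) = v z) \<and>
             (\<forall>k'. quantale_hom P Q k' \<and> (\<forall>y\<in>carrier_q B. k' (i y) = u y) \<and>
                   (\<forall>z\<in>carrier_q C. k' (j z) = v z) \<longrightarrow>
                   (\<forall>p\<in>carrier_q P. k' p = k p))))"

definition csubspace :: "(complex \<Rightarrow> 'a \<Rightarrow> 'a) \<Rightarrow> 'a::ab_group_add set \<Rightarrow> bool" where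
  "csubspace sc M \<longleftrightarrow> 0 \<in> M \<and> (\<forall>x\<in>M. \<forall>y\<in>M. x + y \<in> M) \<and> (\<forall>c x. x \<in> M \<longrightarrow> sc c x \<in> M)"

definition cspan :: "(complex \<Rightarrow> 'a \<Rightarrow> 'a) \<Rightarrow> 'a::ab_group_add set \<Rightarrow> 'a set" where
  "cspan sc X = \<Inter>{M. csubspace sc M \<and> X \<subseteq> M}"

definition Max_prod :: "(complex \<Rightarrow> 'a \<Rightarrow> 'a) \<Rightarrow> ('a \<Rightarrow> 'a \<Rightarrow> 'a) \<Rightarrow>
    'a::{ab_group_add,topological_space} set \<Rightarrow> 'a set \<Rightarrow> 'a set" where
  "Max_prod sc mul M N = closure (cspan sc {mul a b | a b. a \<in> M \<and> b \<in> N})"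

text \<open>\<open>Max A\<close>: closed linear subspaces, ordered by inclusion (so joins are closures of sums).\<close>
definition Max_q :: "(complex \<Rightarrow> 'a \<Rightarrow> 'a) \<Rightarrow> ('a \<Rightarrow> 'a \<Rightarrow> 'a) \<Rightarrow>
    'a::{ab_group_add,topological_space} set quantale" where
  "Max_q sc mul = \<lparr> carrier_q = {M. csubspace sc M \<and> closed M}, le_q = (\<subseteq>),
                    mult_q = Max_prod sc mul \<rparr>"

text \<open>\<open>\<T>(A)\<close>: closed two-sided ideals, with the quotient quantale structure of \<open>Max A\<close>.\<close>
definition T_q :: "(complex \<Rightarrow> 'a \<Rightarrow> 'a) \<Rightarrow> ('a \<Rightarrow> 'a \<Rightarrow> 'a) \<Rightarrow>
    'a::{ab_group_add,topological_space} set quantale" where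
  "T_q sc mul = \<lparr> carrier_q = {I. csubspace sc I \<and> closed I \<and>
                       (\<forall>a x. x \<in> I \<longrightarrow> mul a x \<in> I \<and> mul x a \<in> I)},
                  le_q = (\<subseteq>), mult_q = Max_prod sc mul \<rparr>"

definition sigma_q :: "(complex \<Rightarrow> 'a \<Rightarrow> 'a) \<Rightarrow> ('a \<Rightarrow> 'a \<Rightarrow> 'a) \<Rightarrow>
    'a::{ab_group_add,topological_space} set \<Rightarrow> 'a set" where
  "sigma_q sc mul M = Max_prod sc mul (Max_prod sc mul UNIV M) UNIV"

definition Max_map :: "('a \<Rightarrow> 'b::topological_space) \<Rightarrow> 'a set \<Rightarrow> 'b set" where
  "Max_map f M = closure (f ` M)"

definition C2_scale :: "complex \<Rightarrow> complex^2 \<Rightarrow> complex^2" where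
  "C2_scale c v = (\<chi> i. c * v $ i)"

definition C2_mult :: "complex^2 \<Rightarrow> complex^2 \<Rightarrow> complex^2" where
  "C2_mult v w = (\<chi> i. v $ i * w $ i)"

definition M2_scale :: "complex \<Rightarrow> complex^2^2 \<Rightarrow> complex^2^2" where
  "M2_scale c A = (\<chi> i j. c * A $ i $ j)"

definition M2_mult :: "complex^2^2 \<Rightarrow> complex^2^2 \<Rightarrow> complex^2^2" where
  "M2_mult A B = A ** B"

definition diag_emb :: "complex^2 \<Rightarrow> complex^2^2" where
  "diag_emb v = (\<chi> i j. if i = j then v $ i else 0)"

definition triv_q :: "unit quantale" where
  "triv_q = \<lparr> carrier_q = UNIV, le_q = (\<lambda>_ _. True), mult_q = (\<lambda>_ _. ()) \<rparr>"

end

theory Submission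
  imports Defs
begin

(* The lines L+ = C(1,1) and L- = C(1,-1) of C^2 are spanned by invertible elements, so sigma
   sends both to the top ideal, and every cocone (u, v) satisfies u(f L+) = v(1) = u(f L-).
   In M_2(C), with Y the matrices with equal columns and Z those with equal rows,
   Y f(L+) Z = M_2(C) whereas Y f(L-) Z = 0: right multiplication by diag(1,-1) turns Y into
   matrices with opposite columns, and these annihilate Z.
   As u preserves products, u(1) = u(0) is the bottom of the target; monotonicity makes u
   and then v constantly bottom, and the mediating map out of the one-point quantale is
   forced to be the constant bottom map. *)

section \<open>Quantales\<close>

lemma is_quantale_refl: "is_quantale Q \<Longrightarrow> x \<in> carrier_q Q \<Longrightarrow> le_q Q x x"
  by (simp add: is_quantale_def)

lemma is_quantale_antisym:
  assumes "is_quantale Q" "x \<in> carrier_q Q" "y \<in> carrier_q Q" "le_q Q x y" "le_q Q y x"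
  shows "x = y"
  using assms(1)[unfolded is_quantale_def, THEN conjunct2, THEN conjunct1] assms(2-5) by blast

lemma join_q_eqI: "is_quantale Q \<Longrightarrow> is_lub_q Q S x \<Longrightarrow> join_q Q S = x"
  unfolding join_q_def
  by (rule the_equality) (auto simp: is_lub_q_def intro: is_quantale_antisym)

lemma is_quantale_lub_exists: "is_quantale Q \<Longrightarrow> S \<subseteq> carrier_q Q \<Longrightarrow> \<exists>x. is_lub_q Q S x"
  unfolding is_quantale_def by blast

lemma is_lub_join_q: "is_quantale Q \<Longrightarrow> S \<subseteq> carrier_q Q \<Longrightarrow> is_lub_q Q S (join_q Q S)"
  using is_quantale_lub_exists join_q_eqI by metis

lemma join_q_empty_in_carrier: "is_quantale Q \<Longrightarrow> join_q Q {} \<in> carrier_q Q"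
  using is_lub_join_q[of Q "{}"] by (simp add: is_lub_q_def)

lemma join_q_empty_le: "is_quantale Q \<Longrightarrow> x \<in> carrier_q Q \<Longrightarrow> le_q Q (join_q Q {}) x"
  using is_lub_join_q[of Q "{}"] by (simp add: is_lub_q_def)

lemma join_q_singleton: "is_quantale Q \<Longrightarrow> x \<in> carrier_q Q \<Longrightarrow> join_q Q {x} = x"
  by (rule join_q_eqI) (auto simp: is_lub_q_def is_quantale_refl)

lemma mult_q_join_q_empty:
  "is_quantale Q \<Longrightarrow> a \<in> carrier_q Q \<Longrightarrow> mult_q Q a (join_q Q {}) = join_q Q {}"
  unfolding is_quantale_def by (metis empty_subsetI image_empty)

lemma join_q_subset_order_eqI:
  assumes "le_q Q = (\<subseteq>)" "t \<in> carrier_q Q" "\<forall>s\<in>S. s \<subseteq> t"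
    and "\<forall>z\<in>carrier_q Q. (\<forall>s\<in>S. s \<subseteq> z) \<longrightarrow> t \<subseteq> z"
  shows "join_q Q S = t"
  unfolding join_q_def
  by (rule the_equality) (use assms in \<open>auto simp: is_lub_q_def\<close>)

lemma join_q_subset_order_UNIV:
  "le_q Q = (\<subseteq>) \<Longrightarrow> UNIV \<in> carrier_q Q \<Longrightarrow> join_q Q {X, UNIV} = UNIV"
  by (rule join_q_subset_order_eqI) auto

lemma quantale_hom_le:
  assumes "is_quantale Q" "quantale_hom A Q h" "x \<in> carrier_q A" "t \<in> carrier_q A"
    and "join_q A {x, t} = t"
  shows "le_q Q (h x) (h t)"
proof -
  have "h (join_q A {x, t}) = join_q Q (h ` {x, t})"
    using assms(2-4) unfolding quantale_hom_def by blast
  with assms(5) have join: "join_q Q {h x, h t} = h t" by simp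
  have "{h x, h t} \<subseteq> carrier_q Q"
    using assms(2-4) unfolding quantale_hom_def by auto
  then have "le_q Q (h x) (join_q Q {h x, h t})"
    using is_lub_join_q[OF assms(1)] unfolding is_lub_q_def by simp
  then show ?thesis unfolding join .
qed

lemma quantale_hom_eq_bot_if_top_eq_bot:
  assumes Q: "is_quantale Q" and h: "quantale_hom A Q h"
    and t: "t \<in> carrier_q A" "\<forall>x\<in>carrier_q A. join_q A {x, t} = t"
    and "h t = join_q Q {}" and x: "x \<in> carrier_q A"
  shows "h x = join_q Q {}"
proof -
  have hx: "h x \<in> carrier_q Q" using h x unfolding quantale_hom_def by auto
  show ?thesis
  proof (rule is_quantale_antisym[OF Q hx join_q_empty_in_carrier[OF Q]])
    show "le_q Q (h x) (join_q Q {})"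
      using quantale_hom_le[OF Q h x t(1)] t(2) x \<open>h t = join_q Q {}\<close> by simp
    show "le_q Q (join_q Q {}) (h x)" by (rule join_q_empty_le[OF Q hx])
  qed
qed

lemma is_quantale_triv_q: "is_quantale triv_q"
proof -
  have "is_lub_q triv_q S ()" for S by (simp add: triv_q_def is_lub_q_def)
  then show ?thesis unfolding is_quantale_def by (auto simp: triv_q_def)
qed

lemma is_trivial_q_triv_q: "is_trivial_q triv_q"
  by (simp add: is_trivial_q_def)

lemma quantale_hom_to_triv_q: "quantale_hom A triv_q (\<lambda>_. ())"
  by (simp add: quantale_hom_def triv_q_def)

lemma quantale_hom_from_triv_q_bot:
  assumes Q: "is_quantale Q"
  shows "quantale_hom triv_q Q (\<lambda>_. join_q Q {})"
  unfolding quantale_hom_def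
proof (intro conjI allI impI ballI)
  fix S :: "unit set"
  show "join_q Q {} = join_q Q ((\<lambda>_. join_q Q {}) ` S)"
    using join_q_singleton[OF Q join_q_empty_in_carrier[OF Q]]
    by (cases "S = {}") (simp_all add: image_constant_conv)
next
  show "join_q Q {} = mult_q Q (join_q Q {}) (join_q Q {})"
    using mult_q_join_q_empty[OF Q join_q_empty_in_carrier[OF Q]] by simp
qed (use join_q_empty_in_carrier[OF Q] in auto)

lemma is_pushout_q_triv_qI:
  assumes "carrier_q B \<noteq> {}"
    and collapse: "\<And>(Q :: 'q quantale) u v. is_quantale Q \<Longrightarrow> quantale_hom B Q u \<Longrightarrow>
      quantale_hom C Q v \<Longrightarrow> \<forall>x\<in>carrier_q A. u (f x) = v (g x) \<Longrightarrow>
      (\<forall>y\<in>carrier_q B. u y = join_q Q {}) \<and> (\<forall>z\<in>carrier_q C. v z = join_q Q {})"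
  shows "is_pushout_q A B C f g triv_q (\<lambda>_. ()) (\<lambda>_. ()) TYPE('q)"
  unfolding is_pushout_q_def
proof (intro conjI allI impI is_quantale_triv_q quantale_hom_to_triv_q ballI refl)
  fix Q :: "'q quantale" and u v
  assume cocone: "is_quantale Q \<and> quantale_hom B Q u \<and> quantale_hom C Q v \<and>
    (\<forall>x\<in>carrier_q A. u (f x) = v (g x))"
  then have "(\<forall>y\<in>carrier_q B. u y = join_q Q {}) \<and> (\<forall>z\<in>carrier_q C. v z = join_q Q {})"
    using collapse by blast
  with cocone \<open>carrier_q B \<noteq> {}\<close> show "\<exists>k. quantale_hom triv_q Q k \<and>
      (\<forall>y\<in>carrier_q B. k () = u y) \<and> (\<forall>z\<in>carrier_q C. k () = v z) \<and>
      (\<forall>k'. quantale_hom triv_q Q k' \<and> (\<forall>y\<in>carrier_q B. k' () = u y) \<and>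
        (\<forall>z\<in>carrier_q C. k' () = v z) \<longrightarrow> (\<forall>p\<in>carrier_q triv_q. k' p = k p))"
    by (intro exI[of _ "\<lambda>_. join_q Q {}"]) (auto intro: quantale_hom_from_triv_q_bot)
qed

section \<open>Closed complex subspaces and their products\<close>

lemma csubspace_UNIV: "csubspace sc UNIV"
  by (simp add: csubspace_def)

lemma csubspace_cspan: "csubspace sc (cspan sc X)"
  unfolding cspan_def csubspace_def by auto

lemma cspan_superset: "X \<subseteq> cspan sc X"
  unfolding cspan_def by blast

lemma cspan_least: "csubspace sc S \<Longrightarrow> X \<subseteq> S \<Longrightarrow> cspan sc X \<subseteq> S"
  unfolding cspan_def by blast

lemma cspan_mono: "X \<subseteq> Y \<Longrightarrow> cspan sc X \<subseteq> cspan sc Y"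
  unfolding cspan_def by blast

lemma Max_prod_mem:
  assumes "a \<in> M" "b \<in> N"
  shows "mul a b \<in> Max_prod sc mul M N"
proof -
  have "mul a b \<in> {mul a b | a b. a \<in> M \<and> b \<in> N}"
    using assms by blast
  then have "mul a b \<in> cspan sc {mul a b | a b. a \<in> M \<and> b \<in> N}"
    by (rule subsetD[OF cspan_superset])
  then show ?thesis
    unfolding Max_prod_def by (rule subsetD[OF closure_subset])
qed

lemma zero_in_Max_prod: "0 \<in> Max_prod sc mul M N"
  unfolding Max_prod_def using csubspace_cspan closure_subset unfolding csubspace_def by blast

lemma Max_prod_least:
  assumes "csubspace sc S" "closed S" "\<And>a b. a \<in> M \<Longrightarrow> b \<in> N \<Longrightarrow> mul a b \<in> S"
  shows "Max_prod sc mul M N \<subseteq> S"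
  unfolding Max_prod_def
  by (rule closure_minimal[OF cspan_least[OF assms(1)] assms(2)]) (use assms(3) in blast)

lemma Max_prod_mono:
  "M \<subseteq> M' \<Longrightarrow> N \<subseteq> N' \<Longrightarrow> Max_prod sc mul M N \<subseteq> Max_prod sc mul M' N'"
  unfolding Max_prod_def by (intro closure_mono cspan_mono) blast

lemma sigma_q_eq_UNIV:
  assumes "w \<in> M" "\<And>x. \<exists>a. mul a w = x" "\<And>x. mul x e = x"
  shows "sigma_q sc mul M = UNIV"
proof -
  have "x \<in> Max_prod sc mul UNIV M" for x
  proof -
    obtain a where "mul a w = x" using assms(2) by blast
    then show ?thesis using Max_prod_mem[OF UNIV_I assms(1), of mul a sc] by simp
  qed
  then have "mul x e \<in> sigma_q sc mul M" for x
    unfolding sigma_q_def by (rule Max_prod_mem) simp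
  then show ?thesis using assms(3) by auto
qed

lemma le_q_Max_q: "le_q (Max_q sc mul) = (\<subseteq>)"
  by (simp add: Max_q_def)

lemma le_q_T_q: "le_q (T_q sc mul) = (\<subseteq>)"
  by (simp add: T_q_def)

lemma UNIV_in_Max_q: "UNIV \<in> carrier_q (Max_q sc mul)"
  by (simp add: Max_q_def csubspace_UNIV)

lemma UNIV_in_T_q: "UNIV \<in> carrier_q (T_q sc mul)"
  by (simp add: T_q_def csubspace_UNIV)

locale complex_scaling =
  fixes sc :: "complex \<Rightarrow> 'a::euclidean_space \<Rightarrow> 'a"
  assumes scaleR_eq_sc: "r *\<^sub>R x = sc (of_real r) x"
    and sc_add_left: "sc (a + b) x = sc a x + sc b x"
    and sc_sc: "sc a (sc b x) = sc (a * b) x"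
begin

lemma sc_zero_left: "sc 0 x = 0"
  using scaleR_eq_sc[of 0 x] by simp

lemma sc_one: "sc 1 x = x"
  using scaleR_eq_sc[of 1 x] by simp

lemma sc_zero_right: "sc c 0 = 0"
  using sc_sc[of c 0 0] by (simp add: sc_zero_left)

lemma closed_csubspace: "csubspace sc S \<Longrightarrow> closed S"
  by (rule closed_subspace) (simp add: subspace_def csubspace_def scaleR_eq_sc)

lemma csubspace_zero: "csubspace sc {0}"
  by (simp add: csubspace_def sc_zero_right)

lemma csubspace_line: "csubspace sc (range (\<lambda>c. sc c w))"
  unfolding csubspace_def
proof (intro conjI ballI allI impI)
  show "0 \<in> range (\<lambda>c. sc c w)"
    by (rule range_eqI[of _ _ 0]) (simp add: sc_zero_left)
  fix x y assume "x \<in> range (\<lambda>c. sc c w)" "y \<in> range (\<lambda>c. sc c w)"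
  then obtain a b where "x = sc a w" "y = sc b w" by blast
  then show "x + y \<in> range (\<lambda>c. sc c w)"
    by (intro range_eqI[of _ _ "a + b"]) (simp add: sc_add_left)
next
  fix d x assume "x \<in> range (\<lambda>c. sc c w)"
  then obtain a where "x = sc a w" by blast
  then show "sc d x \<in> range (\<lambda>c. sc c w)"
    by (intro range_eqI[of _ _ "d * a"]) (simp add: sc_sc)
qed

lemma Max_q_carrier_iff: "S \<in> carrier_q (Max_q sc mul) \<longleftrightarrow> csubspace sc S"
  by (auto simp: Max_q_def closed_csubspace)

lemma Max_prod_in_Max_q: "Max_prod sc mul M N \<in> carrier_q (Max_q sc mul)"
  using closed_csubspace[OF csubspace_cspan]
  by (simp add: Max_q_carrier_iff Max_prod_def csubspace_cspan)

lemma join_q_Max_q_empty: "join_q (Max_q sc mul) {} = {0}"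
  by (rule join_q_subset_order_eqI)
    (auto simp: le_q_Max_q Max_q_carrier_iff csubspace_zero, auto simp: csubspace_def)

lemma quantale_hom_Max_prod3:
  assumes "quantale_hom (Max_q sc mul) Q u"
    and "X \<in> carrier_q (Max_q sc mul)" "Y \<in> carrier_q (Max_q sc mul)"
    and "Z \<in> carrier_q (Max_q sc mul)"
  shows "u (Max_prod sc mul (Max_prod sc mul X Y) Z) = mult_q Q (mult_q Q (u X) (u Y)) (u Z)"
  using assms Max_prod_in_Max_q unfolding quantale_hom_def by (simp add: Max_q_def)

end

section \<open>The diagonal embedding of \<open>\<complex>\<^sup>2\<close> into \<open>M\<^sub>2(\<complex>)\<close>\<close>

interpretation C2: complex_scaling C2_scale
proof
  show "r *\<^sub>R x = C2_scale (of_real r) x" for r x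
    by (simp add: C2_scale_def vec_eq_iff) (simp add: scaleR_conv_of_real)
qed (simp_all add: C2_scale_def vec_eq_iff algebra_simps)

interpretation M2: complex_scaling M2_scale
proof
  show "r *\<^sub>R x = M2_scale (of_real r) x" for r x
    by (simp add: M2_scale_def vec_eq_iff) (simp add: scaleR_conv_of_real)
qed (simp_all add: M2_scale_def vec_eq_iff algebra_simps)

abbreviation M2_prod :: "(complex^2^2) set \<Rightarrow> (complex^2^2) set \<Rightarrow> (complex^2^2) set" where
  "M2_prod \<equiv> Max_prod M2_scale M2_mult"

definition equal_columns :: "(complex^2^2) set" where
  "equal_columns = {A. \<forall>i. A$i$1 = A$i$2}"

definition opposite_columns :: "(complex^2^2) set" where
  "opposite_columns = {A. \<forall>i. A$i$1 = - A$i$2}"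

definition equal_rows :: "(complex^2^2) set" where
  "equal_rows = {A. \<forall>j. A$1$j = A$2$j}"

definition pm_one :: "complex^2" where
  "pm_one = (\<chi> i. if i = 1 then 1 else - 1)"

lemma csubspace_equal_columns: "csubspace M2_scale equal_columns"
  by (simp add: csubspace_def equal_columns_def M2_scale_def)

lemma csubspace_opposite_columns: "csubspace M2_scale opposite_columns"
  by (simp add: csubspace_def opposite_columns_def M2_scale_def)

lemma csubspace_equal_rows: "csubspace M2_scale equal_rows"
  by (simp add: csubspace_def equal_rows_def M2_scale_def)

lemma diag_emb_one: "diag_emb 1 = mat 1"
  unfolding diag_emb_def mat_def by (simp only: one_index)

lemma equal_columns_subset_M2_prod_identity_line:
  "equal_columns \<subseteq> M2_prod equal_columns (range (\<lambda>c. M2_scale c (diag_emb 1)))"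
proof
  fix A assume "A \<in> equal_columns"
  moreover have "diag_emb 1 \<in> range (\<lambda>c. M2_scale c (diag_emb 1))"
    by (rule range_eqI[of _ _ 1]) (simp add: M2.sc_one)
  ultimately have "M2_mult A (diag_emb 1) \<in> M2_prod equal_columns (range (\<lambda>c. M2_scale c (diag_emb 1)))"
    by (rule Max_prod_mem)
  then show "A \<in> M2_prod equal_columns (range (\<lambda>c. M2_scale c (diag_emb 1)))"
    by (simp add: M2_mult_def diag_emb_one)
qed

text \<open>A matrix is the sum of its two rows; the one in position \<open>i\<close> is the product of the
  equal-columns matrix \<open>R i\<close> with ones in row \<open>i\<close> and the equal-rows matrix \<open>H A i\<close>
  whose rows are half of row \<open>i\<close> of \<open>A\<close>.\<close>
lemma M2_prod_equal_columns_equal_rows: "M2_prod equal_columns equal_rows = UNIV"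
proof -
  let ?S = "M2_prod equal_columns equal_rows"
  define R :: "2 \<Rightarrow> complex^2^2" where "R i = (\<chi> r c. if r = i then 1 else 0)" for i
  define H :: "complex^2^2 \<Rightarrow> 2 \<Rightarrow> complex^2^2" where "H A i = (\<chi> r c. A$i$c / 2)" for A i
  have "M2_mult (R i) (H A i) \<in> ?S" for A i
    by (rule Max_prod_mem) (simp_all add: R_def H_def equal_columns_def equal_rows_def)
  moreover have "A = M2_mult (R 1) (H A 1) + M2_mult (R 2) (H A 2)" for A
    by (simp add: R_def H_def M2_mult_def matrix_matrix_mult_def vec_eq_iff sum_2 forall_2)
  moreover have "csubspace M2_scale ?S"
    using M2.Max_prod_in_Max_q by (simp add: M2.Max_q_carrier_iff)
  ultimately have "A \<in> ?S" for A
    unfolding csubspace_def by metis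
  then show ?thesis by blast
qed

lemma M2_prod_equal_columns_pm_one_line:
  "M2_prod equal_columns (range (\<lambda>c. M2_scale c (diag_emb pm_one))) \<subseteq> opposite_columns"
  by (rule Max_prod_least[OF csubspace_opposite_columns
        M2.closed_csubspace[OF csubspace_opposite_columns]])
    (auto simp: equal_columns_def opposite_columns_def M2_mult_def M2_scale_def diag_emb_def
      pm_one_def matrix_matrix_mult_def sum_2)

lemma M2_prod_opposite_columns_equal_rows: "M2_prod opposite_columns equal_rows \<subseteq> {0}"
  by (rule Max_prod_least[OF M2.csubspace_zero M2.closed_csubspace[OF M2.csubspace_zero]])
    (auto simp: opposite_columns_def equal_rows_def M2_mult_def matrix_matrix_mult_def
      vec_eq_iff sum_2)

lemma M2_prod_identity_line:
  "M2_prod (M2_prod equal_columns (range (\<lambda>c. M2_scale c (diag_emb 1)))) equal_rows = UNIV"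
  using Max_prod_mono[OF equal_columns_subset_M2_prod_identity_line order_refl]
    M2_prod_equal_columns_equal_rows by blast

lemma M2_prod_pm_one_line:
  "M2_prod (M2_prod equal_columns (range (\<lambda>c. M2_scale c (diag_emb pm_one)))) equal_rows = {0}"
  using Max_prod_mono[OF M2_prod_equal_columns_pm_one_line order_refl]
    M2_prod_opposite_columns_equal_rows zero_in_Max_prod by blast

lemma Max_map_diag_emb_line:
  "Max_map diag_emb (range (\<lambda>c. C2_scale c v)) = range (\<lambda>c. M2_scale c (diag_emb v))"
proof -
  have "diag_emb (C2_scale c v) = M2_scale c (diag_emb v)" for c
    by (simp add: diag_emb_def C2_scale_def M2_scale_def vec_eq_iff)
  then show ?thesis
    unfolding Max_map_def image_image
    using M2.closed_csubspace[OF M2.csubspace_line] by simp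
qed

lemma sigma_q_C2_line:
  assumes "\<And>i. v$i * v$i = 1"
  shows "sigma_q C2_scale C2_mult (range (\<lambda>c. C2_scale c v)) = UNIV"
proof (rule sigma_q_eq_UNIV)
  show "v \<in> range (\<lambda>c. C2_scale c v)"
    by (rule range_eqI[of _ _ 1]) (simp add: C2.sc_one)
  show "\<exists>a. C2_mult a v = x" for x
    using assms by (intro exI[of _ "C2_mult x v"]) (simp add: C2_mult_def vec_eq_iff mult.assoc)
  show "C2_mult x 1 = x" for x
    by (simp add: C2_mult_def vec_eq_iff)
qed

lemma quantale_hom_Max_M2_top_eq_bot:
  assumes Q: "is_quantale Q" and u: "quantale_hom (Max_q M2_scale M2_mult) Q u"
    and lines: "u (range (\<lambda>c. M2_scale c (diag_emb 1))) =
      u (range (\<lambda>c. M2_scale c (diag_emb pm_one)))"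
  shows "u UNIV = join_q Q {}"
proof -
  let ?L = "\<lambda>w. range (\<lambda>c. M2_scale c (diag_emb w))"
  have carrier: "equal_columns \<in> carrier_q (Max_q M2_scale M2_mult)"
    "equal_rows \<in> carrier_q (Max_q M2_scale M2_mult)"
    "?L w \<in> carrier_q (Max_q M2_scale M2_mult)" for w
    by (simp_all add: M2.Max_q_carrier_iff csubspace_equal_columns csubspace_equal_rows
        M2.csubspace_line)
  have "u UNIV = u (M2_prod (M2_prod equal_columns (?L 1)) equal_rows)"
    by (simp add: M2_prod_identity_line)
  also have "\<dots> = u (M2_prod (M2_prod equal_columns (?L pm_one)) equal_rows)"
    using lines by (simp add: M2.quantale_hom_Max_prod3[OF u] carrier)
  also have "\<dots> = u (join_q (Max_q M2_scale M2_mult) {})"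
    by (simp add: M2_prod_pm_one_line M2.join_q_Max_q_empty)
  also have "\<dots> = join_q Q {}"
    using u unfolding quantale_hom_def by simp
  finally show ?thesis .
qed

lemma cocone_of_Max_diag_emb_sigma_is_bot:
  assumes Q: "is_quantale Q"
    and u: "quantale_hom (Max_q M2_scale M2_mult) Q u"
    and v: "quantale_hom (T_q C2_scale C2_mult) Q v"
    and cocone: "\<forall>x\<in>carrier_q (Max_q C2_scale C2_mult).
      u (Max_map diag_emb x) = v (sigma_q C2_scale C2_mult x)"
  shows "(\<forall>y\<in>carrier_q (Max_q M2_scale M2_mult). u y = join_q Q {}) \<and>
    (\<forall>z\<in>carrier_q (T_q C2_scale C2_mult). v z = join_q Q {})"
proof -
  have u_line: "u (range (\<lambda>c. M2_scale c (diag_emb w))) = v UNIV" if "\<And>i. w$i * w$i = 1" for w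
  proof -
    have "range (\<lambda>c. C2_scale c w) \<in> carrier_q (Max_q C2_scale C2_mult)"
      by (simp add: C2.Max_q_carrier_iff C2.csubspace_line)
    with cocone have "u (Max_map diag_emb (range (\<lambda>c. C2_scale c w))) =
        v (sigma_q C2_scale C2_mult (range (\<lambda>c. C2_scale c w)))" by blast
    then show ?thesis
      unfolding Max_map_diag_emb_line sigma_q_C2_line[OF that] .
  qed
  have "u UNIV = join_q Q {}"
    using quantale_hom_Max_M2_top_eq_bot[OF Q u] u_line[of 1] u_line[of pm_one]
    by (simp add: pm_one_def)
  then have u_bot: "\<forall>y\<in>carrier_q (Max_q M2_scale M2_mult). u y = join_q Q {}"
    using quantale_hom_eq_bot_if_top_eq_bot[OF Q u UNIV_in_Max_q]
      join_q_subset_order_UNIV[OF le_q_Max_q UNIV_in_Max_q] by blast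
  then have "v UNIV = join_q Q {}"
    using u_line[of 1] M2.csubspace_line by (simp add: M2.Max_q_carrier_iff)
  then have "\<forall>z\<in>carrier_q (T_q C2_scale C2_mult). v z = join_q Q {}"
    using quantale_hom_eq_bot_if_top_eq_bot[OF Q v UNIV_in_T_q]
      join_q_subset_order_UNIV[OF le_q_T_q UNIV_in_T_q] by blast
  with u_bot show ?thesis ..
qed

theorem lemma3p7:
  shows "is_trivial_q triv_q \<and>
         is_pushout_q (Max_q C2_scale C2_mult) (Max_q M2_scale M2_mult) (T_q C2_scale C2_mult)
           (Max_map diag_emb) (sigma_q C2_scale C2_mult)
           triv_q (\<lambda>_. ()) (\<lambda>_. ()) TYPE('q)"
proof
  show "is_trivial_q triv_q" by (rule is_trivial_q_triv_q)
  show "is_pushout_q (Max_q C2_scale C2_mult) (Max_q M2_scale M2_mult) (T_q C2_scale C2_mult)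
      (Max_map diag_emb) (sigma_q C2_scale C2_mult) triv_q (\<lambda>_. ()) (\<lambda>_. ()) TYPE('q)"
    using UNIV_in_Max_q cocone_of_Max_diag_emb_sigma_is_bot by (intro is_pushout_q_triv_qI) blast+
qed

end
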